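(* Let $G=(V,E)$ be an $n$-vertex graph of maximum degree $\Delta$ with $V=A\cup B$, $A\cap B=\emptyset$, and let $d\ge1$ be such that every vertex of $A$ has degree at most $d$ in $G$. Suppose that the induced subgraph $G(A)$ is given a proper edge coloring with $O(d)$ colors and the induced subgraph $G(B)$ is given a proper edge coloring with $\Delta+O(d)$ colors (colors taken from a common palette). Then a proper edge coloring of all of $G$ using $\Delta+O(d)$ colors can be computed by a deterministic distributed algorithm in the LOCAL model within $O(d)$ rounds.
   Context: LOCAL model: the input graph is the communication network; each vertex is a processor with a unique ID of $O(\log n)$ bits and unbounded local computation; computation proceeds in synchronous rounds, in each of which every vertex may send a message of arbitrary size to each neighbor; running time is the number of rounds until all vertices terminate. Global parameters ($\Delta$, $d$) are known to all vertices, and each vertex knows whether it is in $A$ or $B$. In an edge coloring, edges sharing an endpoint receive distinct colors, and both endpoints of an edge know its color. *)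

theory Defs
  imports Main "HOL-Library.FSet"
begin

definition simple_graph :: "('v \<Rightarrow> 'v \<Rightarrow> bool) \<Rightarrow> 'v set \<Rightarrow> bool" where
  "simple_graph E V \<longleftrightarrow> finite V \<and> (\<forall>u v. E u v \<longrightarrow> u \<in> V \<and> v \<in> V) \<and>
     (\<forall>u v. E u v \<longrightarrow> E v u) \<and> (\<forall>v. \<not> E v v)"

definition nbrs :: "('v \<Rightarrow> 'v \<Rightarrow> bool) \<Rightarrow> 'v set \<Rightarrow> 'v \<Rightarrow> 'v set" where
  "nbrs E V v = {u \<in> V. E v u}"

definition degree :: "('v \<Rightarrow> 'v \<Rightarrow> bool) \<Rightarrow> 'v set \<Rightarrow> 'v \<Rightarrow> nat" where
  "degree E V v = card (nbrs E V v)"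

definition max_degree :: "('v \<Rightarrow> 'v \<Rightarrow> bool) \<Rightarrow> 'v set \<Rightarrow> nat \<Rightarrow> bool" where
  "max_degree E V \<Delta> \<longleftrightarrow> (\<forall>v\<in>V. degree E V v \<le> \<Delta>) \<and> (V \<noteq> {} \<longrightarrow> (\<exists>v\<in>V. degree E V v = \<Delta>))"

definition proper_edge_col_on ::
  "('v \<Rightarrow> 'v \<Rightarrow> bool) \<Rightarrow> 'v set \<Rightarrow> 'v set \<Rightarrow> ('v \<Rightarrow> 'v \<Rightarrow> nat) \<Rightarrow> nat \<Rightarrow> bool" where
  "proper_edge_col_on E V S col k \<longleftrightarrow>
     (\<forall>u\<in>S. \<forall>v\<in>S. E u v \<longrightarrow> col u v = col v u \<and> col u v < k) \<and>
     (\<forall>v\<in>S. \<forall>u\<in>S. \<forall>w\<in>S. E v u \<and> E v w \<and> u \<noteq> w \<longrightarrow> col v u \<noteq> col v w)"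

text \<open>LOCAL model, full-information formulation.  The knowledge ("view") of a vertex after t
  rounds consists of its ID, whether it lies in A, and, for every incident edge, the input
  colour of that edge (if the edge lies inside G(A) or inside G(B); None otherwise) together with
  the view of the corresponding neighbour after t-1 rounds.  Any deterministic t-round LOCAL
  algorithm computes its outputs as a function of this view (and the global parameters).\<close>

datatype view = View nat bool "(nat option \<times> view) fset"

definition edge_label :: "'v set \<Rightarrow> ('v \<Rightarrow> 'v \<Rightarrow> nat) \<Rightarrow> 'v \<Rightarrow> 'v \<Rightarrow> nat option" where
  "edge_label A col v u = (if (v \<in> A) = (u \<in> A) then Some (col v u) else None)"

fun local_view ::
  "('v \<Rightarrow> 'v \<Rightarrow> bool) \<Rightarrow> 'v set \<Rightarrow> 'v set \<Rightarrow> ('v \<Rightarrow> 'v \<Rightarrow> nat) \<Rightarrow> ('v \<Rightarrow> nat) \<Rightarrow> nat \<Rightarrow> 'v \<Rightarrow> view" where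
  "local_view E V A col ID 0 v = View (ID v) (v \<in> A) {||}"
| "local_view E V A col ID (Suc t) v =
     View (ID v) (v \<in> A)
       (Abs_fset ((\<lambda>u. (edge_label A col v u, local_view E V A col ID t u)) ` nbrs E V v))"

text \<open>An algorithm maps (\<Delta>, d, own view, ID of a neighbour) to the colour it outputs for the
  edge to that neighbour.\<close>
definition local_output_ok ::
  "(nat \<Rightarrow> nat \<Rightarrow> view \<Rightarrow> nat \<Rightarrow> nat) \<Rightarrow> nat \<Rightarrow>
   ('v \<Rightarrow> 'v \<Rightarrow> bool) \<Rightarrow> 'v set \<Rightarrow> 'v set \<Rightarrow> ('v \<Rightarrow> 'v \<Rightarrow> nat) \<Rightarrow> ('v \<Rightarrow> nat) \<Rightarrow>
   nat \<Rightarrow> nat \<Rightarrow> nat \<Rightarrow> bool" where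
  "local_output_ok alg r E V A col ID \<Delta> d k \<longleftrightarrow>
     (let out = (\<lambda>v u. alg \<Delta> d (local_view E V A col ID r v) (ID u)) in
       (\<forall>u v. E u v \<longrightarrow> out u v = out v u \<and> out u v < k) \<and>
       (\<forall>v u w. E v u \<and> E v w \<and> u \<noteq> w \<longrightarrow> out v u \<noteq> out v w))"

end

theory Submission
  imports Defs "HOL-Library.Product_Lexorder"
begin

text \<open>Edges inside \<open>A\<close> and inside \<open>B\<close> keep their input colours, those inside \<open>A\<close>
  shifted above every other colour in use. Each edge \<open>ab\<close> with \<open>a \<in> A\<close>, \<open>b \<in> B\<close> gets the
  least colour not used by the \<open>B\<close>-edges at \<open>b\<close> and by the earlier cross edges at \<open>a\<close> and
  at \<open>b\<close>; this is at most \<open>(\<Delta> - 1) + (d - 1)\<close>. The order processes the cross edges at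
  \<open>a\<close> by the rank \<open>j < d\<close> of the \<open>B\<close>-end among the \<open>B\<close>-neighbours of \<open>a\<close> and breaks ties
  at \<open>b\<close> by the ID of the \<open>A\<close>-end. The earlier edges at \<open>b\<close> are visible to \<open>b\<close> itself, and
  those at \<open>a\<close> have smaller rank and lie at distance two from \<open>b\<close>; so by induction on the
  pair (rank, ID) the colour of an edge of rank \<open>j\<close> is determined by the radius-\<open>2j + 2\<close>
  view of \<open>b\<close>, and \<open>2d + 1\<close> rounds suffice.\<close>

lemma Least_not_in_le_card:
  fixes S :: "nat set"
  assumes "finite S"
  shows "(LEAST c. c \<notin> S) \<le> card S"
proof -
  have "\<not> {0..card S} \<subseteq> S"
    using card_mono[OF assms, of "{0..card S}"] by auto
  then obtain c where "c \<in> {0..card S}" "c \<notin> S" by blast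
  then show ?thesis by (meson Least_le atLeastAtMost_iff order_trans)
qed

lemma Least_not_in:
  fixes S :: "nat set"
  assumes "finite S"
  shows "(LEAST c. c \<notin> S) \<notin> S"
proof -
  obtain c where "c \<notin> S" using assms ex_new_if_finite infinite_UNIV_nat by blast
  then show ?thesis by (rule LeastI)
qed

fun view_id :: "view \<Rightarrow> nat" where
  "view_id (View i a S) = i"

fun view_in_A :: "view \<Rightarrow> bool" where
  "view_in_A (View i a S) = a"

fun view_edges :: "view \<Rightarrow> (nat option \<times> view) set" where
  "view_edges (View i a S) = fset S"

definition A_children :: "view \<Rightarrow> view set" where
  "A_children w = {x. \<exists>l. (l, x) \<in> view_edges w \<and> view_in_A x}"

definition B_children :: "view \<Rightarrow> view set" where
  "B_children w = {x. \<exists>l. (l, x) \<in> view_edges w \<and> \<not> view_in_A x}"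

definition B_colours :: "view \<Rightarrow> nat set" where
  "B_colours w = {c. \<exists>x. (Some c, x) \<in> view_edges w \<and> \<not> view_in_A x}"

definition view_rank :: "view \<Rightarrow> nat \<Rightarrow> nat" where
  "view_rank w i = card (view_id ` {x \<in> B_children w. view_id x < i})"

text \<open>\<open>greedy_colour j w i\<close> is the colour of the edge from the \<open>B\<close>-vertex with view \<open>w\<close> to
  its \<open>A\<close>-neighbour with ID \<open>i\<close>, where \<open>j\<close> is the rank of the \<open>B\<close>-vertex at that neighbour.
  The second set collects the earlier cross edges at the \<open>B\<close>-vertex, the third those at
  the \<open>A\<close>-vertex, read off from the view of the \<open>A\<close>-neighbour and its \<open>B\<close>-children.\<close>

function greedy_colour :: "nat \<Rightarrow> view \<Rightarrow> nat \<Rightarrow> nat" where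
  "greedy_colour j w i = (LEAST c. c \<notin> B_colours w
     \<union> (\<lambda>x. greedy_colour (view_rank x (view_id w)) w (view_id x)) `
         {x \<in> A_children w. (view_rank x (view_id w), view_id x) < (j, i)}
     \<union> (\<lambda>(x, y). greedy_colour (view_rank x (view_id y)) y i) `
         {(x, y). x \<in> A_children w \<and> view_id x = i \<and> y \<in> B_children x \<and>
            view_id y \<noteq> view_id w \<and> view_rank x (view_id y) < j})"
  by pat_completeness auto
termination
  by (relation "inv_image (less_than <*lex*> less_than) (\<lambda>(j, w, i). (j, i))") auto

declare greedy_colour.simps [simp del]

definition edge_to :: "view \<Rightarrow> nat \<Rightarrow> nat option \<times> view" where
  "edge_to w i = (SOME p. p \<in> view_edges w \<and> view_id (snd p) = i)"

definition split_algorithm :: "nat \<Rightarrow> nat \<Rightarrow> nat \<Rightarrow> view \<Rightarrow> nat \<Rightarrow> nat" where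
  "split_algorithm c \<Delta> d w i = (let (l, u) = edge_to w i in
     if view_in_A w then
       (if view_in_A u then the l + (\<Delta> + c * d + d) else greedy_colour (view_rank w i) u (view_id w))
     else (if view_in_A u then greedy_colour (view_rank u (view_id w)) w i else the l))"

locale split_colouring =
  fixes E :: "'v \<Rightarrow> 'v \<Rightarrow> bool" and V A :: "'v set" and col :: "'v \<Rightarrow> 'v \<Rightarrow> nat"
    and ID :: "'v \<Rightarrow> nat" and \<Delta> d c :: nat
  assumes graph: "simple_graph E V"
    and degree_le_\<Delta>: "\<forall>v\<in>V. degree E V v \<le> \<Delta>"
    and degree_A_le_d: "\<forall>v\<in>A. degree E V v \<le> d"
    and inj_ID: "inj_on ID V"
    and proper_A: "proper_edge_col_on E V A col (c * d)"
    and proper_B: "proper_edge_col_on E V (V - A) col (\<Delta> + c * d)"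
begin

abbreviation "lv t v \<equiv> local_view E V A col ID t v"
abbreviation "nb v \<equiv> nbrs E V v"

lemma edge_in_V: "E u v \<Longrightarrow> u \<in> V \<and> v \<in> V"
  using graph by (simp add: simple_graph_def)

lemma edge_sym: "E u v \<Longrightarrow> E v u"
  using graph by (simp add: simple_graph_def)

lemma edge_commute: "E u v \<longleftrightarrow> E v u"
  using edge_sym by blast

lemma finite_nb: "finite (nb v)"
  using graph by (simp add: simple_graph_def nbrs_def)

lemma mem_nb_iff: "u \<in> nb v \<longleftrightarrow> E v u"
  using edge_in_V by (auto simp: nbrs_def)

lemma ID_eq_iff: "u \<in> V \<Longrightarrow> u' \<in> V \<Longrightarrow> ID u = ID u' \<longleftrightarrow> u = u'"
  using inj_ID by (auto simp: inj_on_def)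

lemma view_id_lv [simp]: "view_id (lv t v) = ID v"
  by (cases t) auto

lemma view_in_A_lv [simp]: "view_in_A (lv t v) \<longleftrightarrow> v \<in> A"
  by (cases t) auto

lemma view_edges_lv: "view_edges (lv (Suc t) v) = (\<lambda>u. (edge_label A col v u, lv t u)) ` nb v"
  using finite_nb by (simp add: Abs_fset_inverse)

declare local_view.simps(2) [simp del]

lemma A_children_lv: "A_children (lv (Suc t) v) = lv t ` (nb v \<inter> A)"
  unfolding A_children_def view_edges_lv by auto

lemma B_children_lv: "B_children (lv (Suc t) v) = lv t ` (nb v - A)"
  unfolding B_children_def view_edges_lv by auto

lemma B_colours_lv:
  assumes "v \<notin> A"
  shows "B_colours (lv (Suc t) v) = col v ` (nb v - A)"
  unfolding B_colours_def view_edges_lv using assms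
proof (auto simp: edge_label_def)
  fix u
  assume "u \<in> nb v" "u \<notin> A"
  then show "\<exists>x. (Some (col v u), x) \<in> (\<lambda>u. (if u \<notin> A then Some (col v u) else None, lv t u)) ` nb v
      \<and> \<not> view_in_A x"
    by (intro exI[of _ "lv t u"]) force
qed

definition rank :: "'v \<Rightarrow> 'v \<Rightarrow> nat" where
  "rank a b = card (ID ` {u \<in> nb a - A. ID u < ID b})"

lemma view_rank_lv: "view_rank (lv (Suc t) a) (ID b) = rank a b"
proof -
  have "{x \<in> B_children (lv (Suc t) a). view_id x < ID b} = lv t ` {u \<in> nb a - A. ID u < ID b}"
    unfolding B_children_lv by auto
  then show ?thesis
    unfolding view_rank_def rank_def by (simp add: image_image)
qed

lemma rank_less_degree:
  assumes "b \<in> nb a - A"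
  shows "rank a b < card (nb a)"
proof -
  have "rank a b \<le> card {u \<in> nb a - A. ID u < ID b}"
    unfolding rank_def by (rule card_image_le) (simp add: finite_nb)
  also have "\<dots> < card (nb a)"
    using assms by (intro psubset_card_mono) (auto simp: finite_nb)
  finally show ?thesis .
qed

lemma rank_strict_mono:
  assumes "b \<in> nb a - A" "b' \<in> nb a - A" "ID b < ID b'"
  shows "rank a b < rank a b'"
  unfolding rank_def
proof (rule psubset_card_mono)
  have "ID b \<notin> ID ` {u \<in> nb a - A. ID u < ID b}" "ID b \<in> ID ` {u \<in> nb a - A. ID u < ID b'}"
    using assms by auto
  then show "ID ` {u \<in> nb a - A. ID u < ID b} \<subset> ID ` {u \<in> nb a - A. ID u < ID b'}"
    using assms(3) by auto
qed (simp add: finite_nb)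

lemma rank_inj:
  assumes "b \<in> nb a - A" "b' \<in> nb a - A" "b \<noteq> b'"
  shows "rank a b \<noteq> rank a b'"
proof -
  have "ID b \<noteq> ID b'"
    using assms ID_eq_iff edge_in_V mem_nb_iff by blast
  then show ?thesis
    using rank_strict_mono[OF assms(1,2)] rank_strict_mono[OF assms(2,1)] by linarith
qed

lemma earlier_pairs_lv:
  assumes a: "a \<in> A" and ab: "E a b"
  shows "{(x, y). x \<in> A_children (lv (Suc (Suc s)) b) \<and> view_id x = ID a \<and>
            y \<in> B_children x \<and> view_id y \<noteq> ID b \<and> view_rank x (view_id y) < j}
       = (\<lambda>b'. (lv (Suc s) a, lv s b')) ` {b' \<in> nb a - A. b' \<noteq> b \<and> rank a b' < j}"
    (is "?pairs = ?image")
proof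
  show "?pairs \<subseteq> ?image"
  proof (rule subrelI)
    fix x y
    assume xy: "(x, y) \<in> ?pairs"
    then obtain a' where "a' \<in> nb b \<inter> A" "x = lv (Suc s) a'" "ID a' = ID a"
      unfolding A_children_lv by auto
    moreover from this have "a' = a"
      using ID_eq_iff edge_in_V ab mem_nb_iff by blast
    ultimately show "(x, y) \<in> ?image"
      using xy by (auto simp: B_children_lv view_rank_lv)
  qed
  show "?image \<subseteq> ?pairs"
  proof (rule subsetI, elim imageE)
    fix p b'
    assume b': "b' \<in> {b' \<in> nb a - A. b' \<noteq> b \<and> rank a b' < j}" and p: "p = (lv (Suc s) a, lv s b')"
    then have "ID b' \<noteq> ID b"
      using ID_eq_iff edge_in_V ab mem_nb_iff by blast
    then show "p \<in> ?pairs"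
      using a ab b' p by (auto simp: A_children_lv B_children_lv view_rank_lv mem_nb_iff edge_commute)
  qed
qed

lemma greedy_colour_lv:
  assumes a: "a \<in> A" and b: "b \<notin> A" and ab: "E a b"
  shows "greedy_colour j (lv (Suc (Suc s)) b) (ID a) = (LEAST c. c \<notin> col b ` (nb b - A)
    \<union> (\<lambda>a'. greedy_colour (rank a' b) (lv (Suc (Suc s)) b) (ID a')) `
        {a' \<in> nb b \<inter> A. (rank a' b, ID a') < (j, ID a)}
    \<union> (\<lambda>b'. greedy_colour (rank a b') (lv s b') (ID a)) ` {b' \<in> nb a - A. b' \<noteq> b \<and> rank a b' < j})"
proof -
  have "{x \<in> A_children (lv (Suc (Suc s)) b). (view_rank x (ID b), view_id x) < (j, ID a)}
      = lv (Suc s) ` {a' \<in> nb b \<inter> A. (rank a' b, ID a') < (j, ID a)}"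
    unfolding A_children_lv by (auto simp: view_rank_lv)
  then show ?thesis
    by (subst greedy_colour.simps)
       (simp only: earlier_pairs_lv[OF a ab] B_colours_lv[OF b] image_image view_id_lv
          prod.case view_rank_lv)
qed

lemma greedy_colour_depth_indep:
  assumes "a \<in> A" "b \<notin> A" "E a b" "2 * rank a b + 2 \<le> t" "2 * rank a b + 2 \<le> t'"
  shows "greedy_colour (rank a b) (lv t b) (ID a) = greedy_colour (rank a b) (lv t' b) (ID a)"
  using assms
proof (induction "(rank a b, ID a)" arbitrary: a b t t' rule: less_induct)
  case less
  note a = less.prems(1) and b = less.prems(2) and ab = less.prems(3)
  obtain s s' where s: "t = Suc (Suc s)" and s': "t' = Suc (Suc s')"
    using less.prems(4,5) by (intro that[of "t - 2" "t' - 2"]) auto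
  let ?earlier_at_b = "{a' \<in> nb b \<inter> A. (rank a' b, ID a') < (rank a b, ID a)}"
  let ?earlier_at_a = "{b' \<in> nb a - A. b' \<noteq> b \<and> rank a b' < rank a b}"
  have "(\<lambda>a'. greedy_colour (rank a' b) (lv t b) (ID a')) ` ?earlier_at_b
      = (\<lambda>a'. greedy_colour (rank a' b) (lv t' b) (ID a')) ` ?earlier_at_b"
    using b less.prems(4,5)
    by (intro image_cong refl less.hyps) (auto simp: mem_nb_iff edge_commute)
  moreover have "(\<lambda>b'. greedy_colour (rank a b') (lv s b') (ID a)) ` ?earlier_at_a
      = (\<lambda>b'. greedy_colour (rank a b') (lv s' b') (ID a)) ` ?earlier_at_a"
    using a less.prems(4,5) s s'
    by (intro image_cong refl less.hyps) (auto simp: mem_nb_iff)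
  ultimately show ?case
    unfolding s s' greedy_colour_lv[OF a b ab] by (simp only:)
qed

definition AB_colour :: "'v \<Rightarrow> 'v \<Rightarrow> nat" where
  "AB_colour a b = greedy_colour (rank a b) (lv (2 * rank a b + 2) b) (ID a)"

lemma greedy_colour_eq_AB_colour:
  "a \<in> A \<Longrightarrow> b \<notin> A \<Longrightarrow> E a b \<Longrightarrow> 2 * rank a b + 2 \<le> t \<Longrightarrow>
    greedy_colour (rank a b) (lv t b) (ID a) = AB_colour a b"
  unfolding AB_colour_def by (rule greedy_colour_depth_indep) auto

definition forbidden :: "'v \<Rightarrow> 'v \<Rightarrow> nat set" where
  "forbidden a b = col b ` (nb b - A)
    \<union> (\<lambda>a'. AB_colour a' b) ` {a' \<in> nb b \<inter> A. (rank a' b, ID a') < (rank a b, ID a)}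
    \<union> AB_colour a ` {b' \<in> nb a - A. b' \<noteq> b \<and> rank a b' < rank a b}"

lemma finite_forbidden: "finite (forbidden a b)"
  unfolding forbidden_def using finite_nb by auto

lemma AB_colour_eq_Least:
  assumes a: "a \<in> A" and b: "b \<notin> A" and ab: "E a b"
  shows "AB_colour a b = (LEAST c. c \<notin> forbidden a b)"
proof -
  let ?earlier_at_b = "{a' \<in> nb b \<inter> A. (rank a' b, ID a') < (rank a b, ID a)}"
  let ?earlier_at_a = "{b' \<in> nb a - A. b' \<noteq> b \<and> rank a b' < rank a b}"
  have "(\<lambda>a'. greedy_colour (rank a' b) (lv (Suc (Suc (2 * rank a b))) b) (ID a')) ` ?earlier_at_b
      = (\<lambda>a'. AB_colour a' b) ` ?earlier_at_b"
    using b by (intro image_cong refl greedy_colour_eq_AB_colour) (auto simp: mem_nb_iff edge_commute)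
  moreover have "(\<lambda>b'. greedy_colour (rank a b') (lv (2 * rank a b) b') (ID a)) ` ?earlier_at_a
      = AB_colour a ` ?earlier_at_a"
    using a by (intro image_cong refl greedy_colour_eq_AB_colour) (auto simp: mem_nb_iff)
  moreover have "2 * rank a b + 2 = Suc (Suc (2 * rank a b))"
    by simp
  ultimately show ?thesis
    unfolding AB_colour_def forbidden_def by (simp only: greedy_colour_lv[OF a b ab])
qed

lemma AB_colour_not_forbidden: "a \<in> A \<Longrightarrow> b \<notin> A \<Longrightarrow> E a b \<Longrightarrow> AB_colour a b \<notin> forbidden a b"
  using AB_colour_eq_Least Least_not_in[OF finite_forbidden] by simp

lemma AB_colour_bound:
  assumes a: "a \<in> A" and b: "b \<notin> A" and ab: "E a b"
  shows "AB_colour a b + 2 \<le> \<Delta> + d"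
proof -
  have ba: "a \<in> nb b" "b \<in> nb a"
    using ab by (simp_all add: mem_nb_iff edge_commute)
  have "forbidden a b \<subseteq> (\<lambda>u. if u \<in> A then AB_colour u b else col b u) ` (nb b - {a})
      \<union> AB_colour a ` (nb a - {b})" (is "_ \<subseteq> ?at_b \<union> ?at_a")
    unfolding forbidden_def using a by auto
  then have "card (forbidden a b) \<le> card (?at_b \<union> ?at_a)"
    by (intro card_mono) (simp_all add: finite_nb)
  also have "\<dots> \<le> card ?at_b + card ?at_a"
    by (rule card_Un_le)
  also have "\<dots> \<le> card (nb b - {a}) + card (nb a - {b})"
    by (intro add_mono card_image_le) (simp_all add: finite_nb)
  finally have "card (forbidden a b) \<le> card (nb b - {a}) + card (nb a - {b})" .
  moreover have "AB_colour a b \<le> card (forbidden a b)"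
    using AB_colour_eq_Least[OF assms] Least_not_in_le_card[OF finite_forbidden] by simp
  ultimately have "AB_colour a b \<le> (card (nb b) - 1) + (card (nb a) - 1)"
    using ba finite_nb by simp
  moreover have "card (nb b) \<le> \<Delta>" "card (nb a) \<le> d"
    using degree_le_\<Delta> degree_A_le_d a edge_in_V ab by (auto simp: degree_def)
  moreover have "card (nb a) > 0" "card (nb b) > 0"
    using ba finite_nb card_gt_0_iff by blast+
  ultimately show ?thesis
    by linarith
qed

definition final_colour :: "'v \<Rightarrow> 'v \<Rightarrow> nat" where
  "final_colour v u =
     (if v \<in> A \<and> u \<in> A then col v u + (\<Delta> + c * d + d)
      else if v \<in> A then AB_colour v u
      else if u \<in> A then AB_colour u v
      else col v u)"

lemma edge_to_lv:
  assumes "E v u"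
  shows "edge_to (lv (Suc s) v) (ID u) = (edge_label A col v u, lv s u)"
  unfolding edge_to_def
proof (rule some_equality)
  fix p
  assume "p \<in> view_edges (lv (Suc s) v) \<and> view_id (snd p) = ID u"
  then obtain u' where "u' \<in> nb v" "p = (edge_label A col v u', lv s u')" "ID u' = ID u"
    by (auto simp: view_edges_lv)
  then show "p = (edge_label A col v u, lv s u)"
    using ID_eq_iff edge_in_V assms mem_nb_iff by blast
qed (use assms mem_nb_iff in \<open>auto simp: view_edges_lv\<close>)

lemma split_algorithm_lv:
  assumes vu: "E v u" and R: "2 * d + 1 \<le> R"
  shows "split_algorithm c \<Delta> d (lv R v) (ID u) = final_colour v u"
proof -
  obtain s where s: "R = Suc s" "2 * d \<le> s"
    using R by (intro that[of "R - 1"]) auto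
  have uv: "E u v"
    using edge_sym vu by blast
  have rank_d: "rank a b < d" if "a \<in> A" "b \<notin> A" "E a b" for a b
    using rank_less_degree[of b a] degree_A_le_d that by (auto simp: degree_def mem_nb_iff)
  have alg: "split_algorithm c \<Delta> d (lv R v) (ID u) =
      (if v \<in> A then
         (if u \<in> A then col v u + (\<Delta> + c * d + d)
          else greedy_colour (view_rank (lv R v) (ID u)) (lv s u) (ID v))
       else (if u \<in> A then greedy_colour (view_rank (lv s u) (ID v)) (lv R v) (ID u) else col v u))"
    unfolding split_algorithm_def s(1) edge_to_lv[OF vu] by (simp add: edge_label_def)
  show ?thesis
  proof (cases "v \<in> A"; cases "u \<in> A")
    assume "v \<in> A" "u \<notin> A"
    then show ?thesis
      using alg rank_d[of v u] vu s greedy_colour_eq_AB_colour[of v u s]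
      by (simp add: final_colour_def s(1) view_rank_lv)
  next
    assume uA: "u \<in> A" and vB: "v \<notin> A"
    then have "rank u v < d"
      using rank_d uv by blast
    then obtain s' where "s = Suc s'"
      using s by (cases s) auto
    then show ?thesis
      using alg \<open>rank u v < d\<close> uA vB uv s greedy_colour_eq_AB_colour[of u v R]
      by (simp add: final_colour_def view_rank_lv)
  qed (simp_all add: alg final_colour_def)
qed

lemma col_A:
  "u \<in> A \<Longrightarrow> v \<in> A \<Longrightarrow> E u v \<Longrightarrow> col u v = col v u \<and> col u v < c * d"
  "v \<in> A \<Longrightarrow> u \<in> A \<Longrightarrow> w \<in> A \<Longrightarrow> E v u \<Longrightarrow> E v w \<Longrightarrow> u \<noteq> w \<Longrightarrow> col v u \<noteq> col v w"
  using proper_A unfolding proper_edge_col_on_def by blast+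

lemma col_B:
  "u \<in> V - A \<Longrightarrow> v \<in> V - A \<Longrightarrow> E u v \<Longrightarrow> col u v = col v u \<and> col u v < \<Delta> + c * d"
  "v \<in> V - A \<Longrightarrow> u \<in> V - A \<Longrightarrow> w \<in> V - A \<Longrightarrow> E v u \<Longrightarrow> E v w \<Longrightarrow> u \<noteq> w \<Longrightarrow> col v u \<noteq> col v w"
  using proper_B unfolding proper_edge_col_on_def by blast+

lemma final_colour_sym_bound:
  assumes "E u v"
  shows "final_colour u v = final_colour v u \<and> final_colour u v < \<Delta> + (2 * c + 3) * d"
  using col_A(1)[of u v] col_B(1)[of u v] AB_colour_bound[of u v] AB_colour_bound[of v u]
    assms edge_sym[OF assms] edge_in_V[OF assms]
  by (auto simp: final_colour_def algebra_simps)

lemma AB_colour_inj_at_A: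
  assumes a: "a \<in> A" and b: "b \<in> nb a - A" "b' \<in> nb a - A" "b \<noteq> b'"
  shows "AB_colour a b \<noteq> AB_colour a b'"
proof -
  have earlier: "AB_colour a x \<noteq> AB_colour a y" if "x \<in> nb a - A" "y \<in> nb a - A" "rank a y < rank a x" for x y
    using AB_colour_not_forbidden[of a x] that a by (auto simp: forbidden_def mem_nb_iff)
  show ?thesis
    using rank_inj[OF b] earlier[OF b(1,2)] earlier[OF b(2,1)] by (cases "rank a b < rank a b'") auto
qed

lemma AB_colour_inj_at_B:
  assumes b: "b \<notin> A" and a: "a \<in> nb b \<inter> A" "a' \<in> nb b \<inter> A" "a \<noteq> a'"
  shows "AB_colour a b \<noteq> AB_colour a' b"
proof -
  have earlier: "AB_colour x b \<noteq> AB_colour y b"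
    if "x \<in> nb b \<inter> A" "y \<in> nb b \<inter> A" "(rank y b, ID y) < (rank x b, ID x)" for x y
    using AB_colour_not_forbidden[of x b] that b by (auto simp: forbidden_def mem_nb_iff edge_commute)
  have "(rank a b, ID a) \<noteq> (rank a' b, ID a')"
    using a ID_eq_iff edge_in_V mem_nb_iff by blast
  then consider "(rank a b, ID a) < (rank a' b, ID a')" | "(rank a' b, ID a') < (rank a b, ID a)"
    by (rule neqE)
  then show ?thesis
    using earlier[OF a(1,2)] earlier[OF a(2,1)] by cases auto
qed

lemma AB_colour_neq_col_B:
  "a \<in> A \<Longrightarrow> b \<notin> A \<Longrightarrow> E a b \<Longrightarrow> u \<in> nb b - A \<Longrightarrow> AB_colour a b \<noteq> col b u"
  using AB_colour_not_forbidden[of a b] by (auto simp: forbidden_def)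

lemma final_colour_distinct:
  assumes "E v u" "E v w" "u \<noteq> w"
  shows "final_colour v u \<noteq> final_colour v w"
  using assms col_A(2)[of v u w] col_B(2)[of v u w] edge_in_V[OF assms(1)] edge_in_V[OF assms(2)]
    edge_sym[OF assms(1)] edge_sym[OF assms(2)]
    AB_colour_inj_at_A[of v u w] AB_colour_inj_at_B[of v u w]
    AB_colour_neq_col_B[of u v w] AB_colour_neq_col_B[of w v u]
    AB_colour_bound[of v u] AB_colour_bound[of v w]
  by (auto simp: final_colour_def mem_nb_iff)

theorem split_algorithm_correct:
  assumes "2 * d + 1 \<le> R"
  shows "local_output_ok (split_algorithm c) R E V A col ID \<Delta> d (\<Delta> + (2 * c + 3) * d)"
  using final_colour_sym_bound final_colour_distinct
  by (auto simp: local_output_ok_def split_algorithm_lv[OF _ assms] edge_commute)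

end

theorem mainTheorem11:
  fixes c k :: nat
  shows "\<exists>C::nat. \<exists>alg :: nat \<Rightarrow> nat \<Rightarrow> view \<Rightarrow> nat \<Rightarrow> nat.
    \<forall>(E :: 'v \<Rightarrow> 'v \<Rightarrow> bool) V A col ID \<Delta> d.
      simple_graph E V \<and> max_degree E V \<Delta> \<and> A \<subseteq> V \<and> d \<ge> 1 \<and>
      (\<forall>v\<in>A. degree E V v \<le> d) \<and>
      inj_on ID V \<and> (\<forall>v\<in>V. ID v < card V ^ k) \<and>
      proper_edge_col_on E V A col (c * d) \<and>
      proper_edge_col_on E V (V - A) col (\<Delta> + c * d)
      \<longrightarrow> local_output_ok alg (C * d) E V A col ID \<Delta> d (\<Delta> + C * d)"
proof (intro exI[of _ "2 * c + 3"] exI[of _ "split_algorithm c"] allI impI, elim conjE)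
  fix E :: "'v \<Rightarrow> 'v \<Rightarrow> bool" and V A col and ID :: "'v \<Rightarrow> nat" and \<Delta> d :: nat
  assume "simple_graph E V" "max_degree E V \<Delta>" "d \<ge> 1"
    "\<forall>v\<in>A. degree E V v \<le> d" "inj_on ID V"
    "proper_edge_col_on E V A col (c * d)" "proper_edge_col_on E V (V - A) col (\<Delta> + c * d)"
  then interpret split_colouring E V A col ID \<Delta> d c
    by unfold_locales (auto simp: max_degree_def)
  show "local_output_ok (split_algorithm c) ((2 * c + 3) * d) E V A col ID \<Delta> d (\<Delta> + (2 * c + 3) * d)"
    using \<open>d \<ge> 1\<close> by (intro split_algorithm_correct) (simp add: algebra_simps)
qed

end
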